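(* For finite magmas, the laws $\mathrm{x}\simeq(\mathrm{x}\diamond(\mathrm{x}\diamond\mathrm{y}))\diamond\mathrm{y}$ and $\mathrm{x}\simeq(\mathrm{x}\diamond\mathrm{y})\diamond((\mathrm{x}\diamond\mathrm{y})\diamond\mathrm{y})$ are equivalent: a finite magma satisfies one if and only if it satisfies the other.
   Context: A magma is a set with a binary operation $\diamond$; it satisfies a law if the identity holds for all assignments of variables. *)

theory Defs
  imports Main
begin

definition magma :: "'a set \<Rightarrow> ('a \<Rightarrow> 'a \<Rightarrow> 'a) \<Rightarrow> bool" where
  "magma S op \<longleftrightarrow> (\<forall>x\<in>S. \<forall>y\<in>S. op x y \<in> S)"

definition satisfies_law_A :: "'a set \<Rightarrow> ('a \<Rightarrow> 'a \<Rightarrow> 'a) \<Rightarrow> bool" where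
  "satisfies_law_A S op \<longleftrightarrow> (\<forall>x\<in>S. \<forall>y\<in>S. x = op (op x (op x y)) y)"

definition satisfies_law_B :: "'a set \<Rightarrow> ('a \<Rightarrow> 'a \<Rightarrow> 'a) \<Rightarrow> bool" where
  "satisfies_law_B S op \<longleftrightarrow> (\<forall>x\<in>S. \<forall>y\<in>S. x = op (op x y) (op (op x y) y))"

end

theory Submission
  imports Defs
begin

(* With R_y x = x \<diamond> y and G_y z = z \<diamond> (z \<diamond> y), the first law says that R_y \<circ> G_y is the
   identity on S, the second that G_y \<circ> R_y is. On a finite set a one-sided inverse of a
   self-map is two-sided, since a surjective self-map of a finite set is injective. *)

lemma finite_right_inverse_imp_left_inverse:
  assumes "finite S" and "f ` S \<subseteq> S" and "g ` S \<subseteq> S"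
    and right_inv: "\<forall>x\<in>S. f (g x) = x"
  shows "\<forall>x\<in>S. g (f x) = x"
proof
  fix x assume x: "x \<in> S"
  have "S \<subseteq> f ` S"
  proof
    fix z assume "z \<in> S"
    then show "z \<in> f ` S"
      using right_inv assms(3) by (metis image_eqI image_subset_iff)
  qed
  then have "inj_on f S"
    by (rule finite_surj_inj[OF \<open>finite S\<close>])
  moreover have "f (g (f x)) = f x" and "g (f x) \<in> S"
    using right_inv assms(2,3) x by auto
  ultimately show "g (f x) = x"
    using x by (auto dest: inj_onD)
qed

lemma finite_right_inverse_iff_left_inverse:
  assumes "finite S" and "f ` S \<subseteq> S" and "g ` S \<subseteq> S"
  shows "(\<forall>x\<in>S. f (g x) = x) \<longleftrightarrow> (\<forall>x\<in>S. g (f x) = x)"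
  using finite_right_inverse_imp_left_inverse[OF assms]
    finite_right_inverse_imp_left_inverse[OF assms(1,3,2)] by blast

theorem mainTheorem16:
  fixes S :: "'a set" and op :: "'a \<Rightarrow> 'a \<Rightarrow> 'a"
  assumes "finite S" and "magma S op"
  shows "satisfies_law_A S op \<longleftrightarrow> satisfies_law_B S op"
proof -
  let ?R = "\<lambda>y x. op x y" and ?G = "\<lambda>y z. op z (op z y)"
  have self_maps: "?R y ` S \<subseteq> S" "?G y ` S \<subseteq> S" if "y \<in> S" for y
    using \<open>magma S op\<close> that by (auto simp: magma_def)
  have "satisfies_law_A S op \<longleftrightarrow> (\<forall>y\<in>S. \<forall>x\<in>S. ?R y (?G y x) = x)"
    unfolding satisfies_law_A_def by (auto simp: eq_commute)
  also have "\<dots> \<longleftrightarrow> (\<forall>y\<in>S. \<forall>x\<in>S. ?G y (?R y x) = x)"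
    using finite_right_inverse_iff_left_inverse[OF \<open>finite S\<close> self_maps] by (rule ball_cong[OF refl])
  also have "\<dots> \<longleftrightarrow> satisfies_law_B S op"
    unfolding satisfies_law_B_def by (auto simp: eq_commute)
  finally show ?thesis .
qed

end
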